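(* For every Bochvar system $\mathbb{B}=\langle\mathbf{B},\mathbf{I}\rangle$, $\mathbb{B}$ is isomorphic to the Bochvar system $\mathbb{B}_{\mathbf{A}_{\mathbb{B}}}$.
   Context: A Bochvar system is a pair $\langle\mathbf{B},\mathbf{I}\rangle$ with $\mathbf{B}$ a Boolean algebra and $I\subseteq B$ containing $1$ and closed under $\wedge$. Bochvar systems $\langle\mathbf{B}_1,\mathbf{I}_1\rangle$ and $\langle\mathbf{B}_2,\mathbf{I}_2\rangle$ are isomorphic if there is a Boolean isomorphism $g:\mathbf{B}_1\to\mathbf{B}_2$ with $g(i)\in I_2$ for all $i\in I_1$. $\mathbf{WK}^e$ is the three-element algebra on $\{0,\tfrac12,1\}$ of type $\langle\wedge,\vee,\neg,J_2,0,1\rangle$. Its operations are: - $\neg$ swaps $0,1$ and fixes $\tfrac12$; - $\wedge,\vee$ are Boolean on $\{0,1\}$ and return $\tfrac12$ if some argument is $\tfrac12$; - $J_2(1)=1$ and $J_2(\tfrac12)=J_2(0)=0$. Bochvar algebras are the members of $ISP(\mathbf{WK}^e)$. Their $\{\wedge,\vee,\neg,0,1\}$-reducts are canonically Płonka sums of Boolean algebras $\mathbf{A}_i$ over a join-semilattice $\langle I,\vee,i_0\rangle$. For a Bochvar system $\mathbb{B}$, $\mathbf{A}_{\mathbb{B}}$ is the unique Bochvar algebra whose $\{\wedge,\vee,\neg,0,1\}$-reduct is the Płonka sum of the following system: - index semilattice $I$ ordered dually to $\mathbf{B}$; - fibres $\mathbf{B}/[i)$, the quotient by the congruence of the principal filter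 $[i)$; - maps $p_{ij}(a/[i))=a/[j)$. For a Bochvar algebra $\mathbf{A}$, $\mathbb{B}_{\mathbf{A}}=\langle\mathbf{A}_{i_0},K\rangle$ with $K=\{J_2(1^{A_i}):i\in I\}$, where $1^{A_i}$ is the top of fibre $\mathbf{A}_i$. *)

theory Defs
  imports Main
begin

definition bochvar_system :: "'a::boolean_algebra set \<Rightarrow> bool" where
  "bochvar_system I \<longleftrightarrow> top \<in> I \<and> (\<forall>i\<in>I. \<forall>j\<in>I. inf i j \<in> I)"

datatype wk = W0 | Wh | W1

fun wneg :: "wk \<Rightarrow> wk" where
  "wneg W0 = W1" | "wneg Wh = Wh" | "wneg W1 = W0"

definition wmeet :: "wk \<Rightarrow> wk \<Rightarrow> wk" where
  "wmeet x y = (if x = Wh \<or> y = Wh then Wh else if x = W1 \<and> y = W1 then W1 else W0)"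

definition wjoin :: "wk \<Rightarrow> wk \<Rightarrow> wk" where
  "wjoin x y = (if x = Wh \<or> y = Wh then Wh else if x = W0 \<and> y = W0 then W0 else W1)"

definition wJ2 :: "wk \<Rightarrow> wk" where
  "wJ2 x = (if x = W1 then W1 else W0)"

record 'c balg =
  carr :: "'c set"
  bmeet :: "'c \<Rightarrow> 'c \<Rightarrow> 'c"
  bjoin :: "'c \<Rightarrow> 'c \<Rightarrow> 'c"
  bneg :: "'c \<Rightarrow> 'c"
  bJ2 :: "'c \<Rightarrow> 'c"
  bzero :: "'c"
  bone :: "'c"

definition is_algebra :: "'c balg \<Rightarrow> bool" where
  "is_algebra A \<longleftrightarrow>
     (\<forall>a\<in>carr A. \<forall>b\<in>carr A. bmeet A a b \<in> carr A \<and> bjoin A a b \<in> carr A) \<and>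
     (\<forall>a\<in>carr A. bneg A a \<in> carr A \<and> bJ2 A a \<in> carr A) \<and>
     bzero A \<in> carr A \<and> bone A \<in> carr A"

definition hom_wk :: "'c balg \<Rightarrow> ('c \<Rightarrow> wk) \<Rightarrow> bool" where
  "hom_wk A f \<longleftrightarrow>
     (\<forall>a\<in>carr A. \<forall>b\<in>carr A. f (bmeet A a b) = wmeet (f a) (f b) \<and>
                               f (bjoin A a b) = wjoin (f a) (f b)) \<and>
     (\<forall>a\<in>carr A. f (bneg A a) = wneg (f a) \<and> f (bJ2 A a) = wJ2 (f a)) \<and>
     f (bzero A) = W0 \<and> f (bone A) = W1"

text \<open>Membership in ISP(WK^e): A is an algebra that embeds into a power (WK^e)^F;
  the embedding is given by its coordinate maps, i.e. a point-separating family F of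
  homomorphisms into WK^e (the index set of the power is F itself).\<close>
definition bochvar_alg :: "'c balg \<Rightarrow> bool" where
  "bochvar_alg A \<longleftrightarrow> is_algebra A \<and>
     (\<exists>F :: ('c \<Rightarrow> wk) set. (\<forall>f\<in>F. hom_wk A f) \<and>
        (\<forall>a\<in>carr A. \<forall>b\<in>carr A. (\<forall>f\<in>F. f a = f b) \<longrightarrow> a = b))"

text \<open>Elements of the Plonka sum are pairs (i, c) with i the index (an element of I,
  the index semilattice being I ordered dually to B, so the semilattice join is the
  Boolean meet and the least index i0 is top) and c a class of B modulo the
  congruence of the principal filter [i), i.e. a ~ b iff a meet i = b meet i.\<close>

definition cls :: "'a::boolean_algebra \<Rightarrow> 'a \<Rightarrow> 'a set" where
  "cls i a = {b. inf b i = inf a i}"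

definition rep :: "'a set \<Rightarrow> 'a" where
  "rep c = (SOME a. a \<in> c)"

definition pl_carrier :: "'a::boolean_algebra set \<Rightarrow> ('a \<times> 'a set) set" where
  "pl_carrier I = {(i, cls i a) | i a. i \<in> I}"

text \<open>Plonka sum operations: x in A_i, y in A_j are sent by p_{i,i\<or>j}, p_{j,i\<or>j}
  (p_{ij}(a/[i)) = a/[j)) to the fibre of the join index and combined there.\<close>
definition pl_meet :: "('a::boolean_algebra \<times> 'a set) \<Rightarrow> ('a \<times> 'a set) \<Rightarrow> ('a \<times> 'a set)" where
  "pl_meet x y = (inf (fst x) (fst y),
                  cls (inf (fst x) (fst y)) (inf (rep (snd x)) (rep (snd y))))"

definition pl_join :: "('a::boolean_algebra \<times> 'a set) \<Rightarrow> ('a \<times> 'a set) \<Rightarrow> ('a \<times> 'a set)" where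
  "pl_join x y = (inf (fst x) (fst y),
                  cls (inf (fst x) (fst y)) (sup (rep (snd x)) (rep (snd y))))"

definition pl_neg :: "('a::boolean_algebra \<times> 'a set) \<Rightarrow> ('a \<times> 'a set)" where
  "pl_neg x = (fst x, cls (fst x) (- rep (snd x)))"

text \<open>The constants live in the fibre of the least index i0 = top.\<close>
definition pl_zero :: "('a::boolean_algebra \<times> 'a set)" where
  "pl_zero = (top, cls top bot)"

definition pl_one :: "('a::boolean_algebra \<times> 'a set)" where
  "pl_one = (top, cls top top)"

text \<open>The algebra whose (meet, join, neg, 0, 1)-reduct is the Plonka sum above and
  whose J2 operation is J.  A_B is the (unique) such algebra that is a Bochvar algebra.\<close>
definition A_sys :: "'a::boolean_algebra set \<Rightarrow> ('a \<times> 'a set \<Rightarrow> 'a \<times> 'a set)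
                      \<Rightarrow> ('a \<times> 'a set) balg" where
  "A_sys I J = \<lparr> carr = pl_carrier I, bmeet = pl_meet, bjoin = pl_join, bneg = pl_neg,
                 bJ2 = J, bzero = pl_zero, bone = pl_one \<rparr>"

definition fibre :: "('a \<times> 'a set) balg \<Rightarrow> 'a \<Rightarrow> ('a \<times> 'a set) set" where
  "fibre A i = {x \<in> carr A. fst x = i}"

definition fibre_top :: "'a::boolean_algebra \<Rightarrow> ('a \<times> 'a set)" where
  "fibre_top i = (i, cls i top)"

definition K_set :: "'a::boolean_algebra set \<Rightarrow> ('a \<times> 'a set) balg \<Rightarrow> ('a \<times> 'a set) set" where
  "K_set I A = {bJ2 A (fibre_top i) | i. i \<in> I}"

text \<open>Isomorphism of Bochvar systems <B, I> and <C, K>, where the Boolean algebra C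
  is the carrier S with the operations of A restricted to it: a Boolean isomorphism
  g : B \<rightarrow> C with g(i) \<in> K for all i \<in> I.\<close>
definition sys_iso :: "'a::boolean_algebra set \<Rightarrow> 'c balg \<Rightarrow> 'c set \<Rightarrow> 'c set \<Rightarrow> bool" where
  "sys_iso I A S K \<longleftrightarrow>
     (\<exists>g. bij_betw g UNIV S \<and>
          (\<forall>x y. g (inf x y) = bmeet A (g x) (g y) \<and> g (sup x y) = bjoin A (g x) (g y)) \<and>
          (\<forall>x. g (- x) = bneg A (g x)) \<and>
          g bot = bzero A \<and> g top = bone A \<and>
          (\<forall>i\<in>I. g i \<in> K))"

text \<open>B is isomorphic to B_A, with B_A = <A_{i0}, K>, i0 = top.\<close>
definition iso_to_BA :: "'a::boolean_algebra set \<Rightarrow> ('a \<times> 'a set) balg \<Rightarrow> bool" where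
  "iso_to_BA I A \<longleftrightarrow> sys_iso I A (fibre A top) (K_set I A)"

end

theory Submission
  imports Defs
begin

text \<open>
  Every ultrafilter U of B yields a homomorphism from the Plonka sum into WK^e, sending a/[i)
  to 1/2 when i \<notin> U and otherwise to 1 or 0 according to whether a \<in> U, provided
  J2(a/[i)) is taken to be (a \<and> i)/[1); by the ultrafilter theorem these homomorphisms
  separate points, so this choice of J2 makes A_B a Bochvar algebra.
  Conversely, any J2 making the Plonka sum a Bochvar algebra satisfies all identities of WK^e.
  The identities J x \<or> \<not> J x = 1, x \<and> J x = x and J(x \<and> y) \<and> \<not> y = y \<and> 0,
  instantiated with x = 1/[i) and y = i/[1), force J2(1/[i)) = i/[1). Hence a \<mapsto> a/[1)
  is a Boolean isomorphism of B onto the fibre of the least index that maps I into K.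
\<close>

definition proper_filter :: "'a::boolean_algebra set \<Rightarrow> bool" where
  "proper_filter F \<longleftrightarrow> top \<in> F \<and> (\<forall>a\<in>F. \<forall>b\<in>F. inf a b \<in> F) \<and>
     (\<forall>a\<in>F. \<forall>b. a \<le> b \<longrightarrow> b \<in> F) \<and> bot \<notin> F"

text \<open>Stated as: the indicator function of U is a Boolean homomorphism into bool.\<close>
definition ultrafilter :: "'a::boolean_algebra set \<Rightarrow> bool" where
  "ultrafilter U \<longleftrightarrow> (\<forall>a b. inf a b \<in> U \<longleftrightarrow> a \<in> U \<and> b \<in> U) \<and> (\<forall>a. - a \<in> U \<longleftrightarrow> a \<notin> U)"

lemma ultrafilter_inf_iff: "ultrafilter U \<Longrightarrow> inf a b \<in> U \<longleftrightarrow> a \<in> U \<and> b \<in> U"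
  unfolding ultrafilter_def by blast

lemma ultrafilter_compl_iff: "ultrafilter U \<Longrightarrow> - a \<in> U \<longleftrightarrow> a \<notin> U"
  unfolding ultrafilter_def by blast

lemma ultrafilter_top: "ultrafilter U \<Longrightarrow> top \<in> U"
  using ultrafilter_inf_iff[of U top "- top"] ultrafilter_compl_iff[of U top] by auto

lemma ultrafilter_bot: "ultrafilter U \<Longrightarrow> bot \<notin> U"
  using ultrafilter_compl_iff[of U bot] ultrafilter_top by auto

lemma ultrafilter_sup_iff: "ultrafilter U \<Longrightarrow> sup a b \<in> U \<longleftrightarrow> a \<in> U \<or> b \<in> U"
  using ultrafilter_compl_iff[of U "sup a b"] ultrafilter_inf_iff[of U "- a" "- b"]
    ultrafilter_compl_iff[of U a] ultrafilter_compl_iff[of U b] by auto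

lemma proper_filter_chain_Union:
  assumes "C \<noteq> {}" "subset.chain {F. proper_filter F} C"
  shows "proper_filter (\<Union>C)"
  unfolding proper_filter_def
proof (intro conjI ballI allI impI)
  have filters: "proper_filter F" if "F \<in> C" for F
    using assms(2) that by (auto simp: subset.chain_def)
  then show "top \<in> \<Union>C" "bot \<notin> \<Union>C"
    using assms(1) by (auto simp: proper_filter_def)
  show "b \<in> \<Union>C" if "a \<in> \<Union>C" "a \<le> b" for a b
    using that filters by (auto simp: proper_filter_def)
  fix a b assume "a \<in> \<Union>C" "b \<in> \<Union>C"
  then obtain F G where "F \<in> C" "G \<in> C" "a \<in> F" "b \<in> G" by blast
  moreover have "F \<subseteq> G \<or> G \<subseteq> F"
    using assms(2) \<open>F \<in> C\<close> \<open>G \<in> C\<close> by (auto simp: subset.chain_def)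
  ultimately show "inf a b \<in> \<Union>C"
    using filters unfolding proper_filter_def by blast
qed

lemma proper_filter_extend:
  assumes F: "proper_filter F" and "- a \<notin> F"
  shows "proper_filter {y. \<exists>u\<in>F. inf u a \<le> y}"
  unfolding proper_filter_def
proof (intro conjI ballI allI impI)
  show "top \<in> {y. \<exists>u\<in>F. inf u a \<le> y}"
    using F by (auto simp: proper_filter_def)
  show "bot \<notin> {y. \<exists>u\<in>F. inf u a \<le> y}"
    using F assms(2) by (auto simp: proper_filter_def inf_shunt bot_unique)
  show "q \<in> {y. \<exists>u\<in>F. inf u a \<le> y}" if "p \<in> {y. \<exists>u\<in>F. inf u a \<le> y}" "p \<le> q" for p q
    using that order_trans by blast
  fix p q assume "p \<in> {y. \<exists>u\<in>F. inf u a \<le> y}" "q \<in> {y. \<exists>u\<in>F. inf u a \<le> y}"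
  then obtain u v where "u \<in> F" "v \<in> F" "inf u a \<le> p" "inf v a \<le> q" by blast
  moreover from this have "inf (inf u v) a \<le> inf p q"
    by (meson inf_le1 inf_le2 inf_mono le_inf_iff order_trans)
  ultimately show "inf p q \<in> {y. \<exists>u\<in>F. inf u a \<le> y}"
    using F by (auto simp: proper_filter_def)
qed

lemma maximal_proper_filter_ultrafilter:
  assumes M: "proper_filter M" and max: "\<And>F. proper_filter F \<Longrightarrow> M \<subseteq> F \<Longrightarrow> F = M"
  shows "ultrafilter M"
  unfolding ultrafilter_def
proof (intro conjI allI)
  show "inf a b \<in> M \<longleftrightarrow> a \<in> M \<and> b \<in> M" for a b
    using M unfolding proper_filter_def by (meson inf_le1 inf_le2)
  show "- a \<in> M \<longleftrightarrow> a \<notin> M" for a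
  proof
    assume "- a \<in> M"
    then show "a \<notin> M"
      using M unfolding proper_filter_def by (metis inf_compl_bot)
  next
    assume "a \<notin> M"
    show "- a \<in> M"
    proof (rule ccontr)
      assume "- a \<notin> M"
      let ?F = "{y. \<exists>u\<in>M. inf u a \<le> y}"
      have "M \<subseteq> ?F" by (auto intro: inf_le1)
      moreover have "a \<in> ?F"
        using M unfolding proper_filter_def by force
      ultimately show False
        using max[OF proper_filter_extend[OF M \<open>- a \<notin> M\<close>]] \<open>a \<notin> M\<close> by blast
    qed
  qed
qed

lemma ultrafilter_exists:
  fixes x :: "'a::boolean_algebra"
  assumes "x \<noteq> bot"
  obtains U where "ultrafilter U" "x \<in> U"
proof -
  let ?A = "{F. proper_filter F \<and> x \<in> F}"
  have "\<exists>M\<in>?A. \<forall>F\<in>?A. M \<subseteq> F \<longrightarrow> F = M"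
  proof (rule subset_Zorn_nonempty)
    have "{y. x \<le> y} \<in> ?A"
      using assms by (auto simp: proper_filter_def bot_unique)
    then show "?A \<noteq> {}" by blast
  next
    fix C assume "C \<noteq> {}" "subset.chain ?A C"
    moreover from this have "subset.chain {F. proper_filter F} C"
      by (auto simp: subset.chain_def)
    ultimately show "\<Union>C \<in> ?A"
      using proper_filter_chain_Union by (auto simp: subset.chain_def)
  qed
  then obtain M where "proper_filter M" "x \<in> M" and "\<forall>F\<in>?A. M \<subseteq> F \<longrightarrow> F = M"
    by blast
  then have "ultrafilter M"
    by (intro maximal_proper_filter_ultrafilter) blast+
  with \<open>x \<in> M\<close> show thesis using that by blast
qed

lemma ultrafilter_le:
  fixes a b :: "'a::boolean_algebra"
  assumes "\<And>U. ultrafilter U \<Longrightarrow> a \<in> U \<Longrightarrow> b \<in> U"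
  shows "a \<le> b"
proof (rule ccontr)
  assume "\<not> a \<le> b"
  then have "inf a (- b) \<noteq> bot" by (simp add: inf_shunt)
  then obtain U where "ultrafilter U" "inf a (- b) \<in> U" by (rule ultrafilter_exists)
  then show False
    using assms ultrafilter_inf_iff ultrafilter_compl_iff by blast
qed

lemma ultrafilter_eqI:
  fixes a b :: "'a::boolean_algebra"
  assumes "\<And>U. ultrafilter U \<Longrightarrow> a \<in> U \<longleftrightarrow> b \<in> U"
  shows "a = b"
  using assms by (blast intro: antisym ultrafilter_le)

lemma bochvar_system_top: "bochvar_system I \<Longrightarrow> top \<in> I"
  unfolding bochvar_system_def by blast

lemma cls_eq_iff: "cls i a = cls i b \<longleftrightarrow> inf a i = inf b i"
  unfolding cls_def by auto

lemma rep_cls: "inf (rep (cls i a)) i = inf a i"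
proof -
  have "a \<in> cls i a" unfolding cls_def by simp
  then have "rep (cls i a) \<in> cls i a" unfolding rep_def by (rule someI)
  then show ?thesis unfolding cls_def by simp
qed

lemma pl_meet_cls: "pl_meet (i, cls i a) (j, cls j b) = (inf i j, cls (inf i j) (inf a b))"
proof -
  let ?a = "rep (cls i a)" and ?b = "rep (cls j b)"
  have "inf (inf ?a ?b) (inf i j) = inf (inf (inf ?a i) (inf ?b j)) (inf i j)"
    by (simp add: inf_aci)
  also have "\<dots> = inf (inf a b) (inf i j)"
    by (simp only: rep_cls) (simp add: inf_aci)
  finally show ?thesis
    unfolding pl_meet_def by (simp add: cls_eq_iff)
qed

lemma pl_join_cls: "pl_join (i, cls i a) (j, cls j b) = (inf i j, cls (inf i j) (sup a b))"
proof -
  let ?a = "rep (cls i a)" and ?b = "rep (cls j b)"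
  have "inf (sup ?a ?b) (inf i j) = sup (inf (inf ?a i) j) (inf (inf ?b j) i)"
    by (simp add: inf_sup_distrib1 inf_sup_distrib2 inf_aci)
  also have "\<dots> = inf (sup a b) (inf i j)"
    by (simp only: rep_cls) (simp add: inf_sup_distrib1 inf_sup_distrib2 inf_aci)
  finally show ?thesis
    unfolding pl_join_def by (simp add: cls_eq_iff)
qed

lemma pl_neg_cls: "pl_neg (i, cls i a) = (i, cls i (- a))"
proof -
  have "inf (- x) i = inf (- inf x i) i" for x :: 'a
    by (simp add: inf_sup_distrib2)
  then have "inf (- rep (cls i a)) i = inf (- a) i"
    by (metis rep_cls)
  then show ?thesis
    unfolding pl_neg_def by (simp add: cls_eq_iff)
qed

lemma pl_carrier_cls_iff [simp]: "(i, cls i a) \<in> pl_carrier I \<longleftrightarrow> i \<in> I"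
  unfolding pl_carrier_def by blast

lemma pl_carrierE:
  assumes "x \<in> pl_carrier I"
  obtains i a where "x = (i, cls i a)" "i \<in> I"
  using assms unfolding pl_carrier_def by blast

lemma is_algebra_A_sys:
  assumes "bochvar_system I" and "\<And>x. x \<in> pl_carrier I \<Longrightarrow> J x \<in> pl_carrier I"
  shows "is_algebra (A_sys I J)"
proof -
  have "top \<in> I" and "\<And>i j. i \<in> I \<Longrightarrow> j \<in> I \<Longrightarrow> inf i j \<in> I"
    using assms(1) unfolding bochvar_system_def by blast+
  then show ?thesis
    unfolding is_algebra_def A_sys_def balg.simps using assms(2)
    by (auto elim!: pl_carrierE simp: pl_meet_cls pl_join_cls pl_neg_cls pl_zero_def pl_one_def)
qed

definition pl_J2 :: "'a::boolean_algebra \<times> 'a set \<Rightarrow> 'a \<times> 'a set" where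
  "pl_J2 x = (top, cls top (inf (fst x) (rep (snd x))))"

lemma pl_J2_cls: "pl_J2 (i, cls i a) = (top, cls top (inf i a))"
proof -
  have "inf i (rep (cls i a)) = inf i a"
    by (metis rep_cls inf_commute)
  then show ?thesis
    unfolding pl_J2_def by simp
qed

definition wk_hom :: "'a::boolean_algebra set \<Rightarrow> 'a \<times> 'a set \<Rightarrow> wk" where
  "wk_hom U x = (if fst x \<in> U then if rep (snd x) \<in> U then W1 else W0 else Wh)"

lemma wk_hom_cls:
  assumes "ultrafilter U"
  shows "wk_hom U (i, cls i a) = (if i \<in> U then if a \<in> U then W1 else W0 else Wh)"
proof (cases "i \<in> U")
  case True
  then have "rep (cls i a) \<in> U \<longleftrightarrow> inf (rep (cls i a)) i \<in> U"
    using ultrafilter_inf_iff[OF assms] by blast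
  also have "\<dots> \<longleftrightarrow> a \<in> U"
    using True ultrafilter_inf_iff[OF assms] by (simp add: rep_cls)
  finally show ?thesis
    unfolding wk_hom_def by simp
qed (simp add: wk_hom_def)

lemma hom_wk_wk_hom:
  assumes U: "ultrafilter U"
  shows "hom_wk (A_sys I pl_J2) (wk_hom U)"
  unfolding hom_wk_def A_sys_def balg.simps
proof (intro conjI ballI)
  note U_simps = wk_hom_cls[OF U] ultrafilter_inf_iff[OF U] ultrafilter_sup_iff[OF U]
    ultrafilter_compl_iff[OF U] ultrafilter_top[OF U] ultrafilter_bot[OF U]
  fix x y assume "x \<in> pl_carrier I" "y \<in> pl_carrier I"
  then obtain i a j b where "x = (i, cls i a)" "y = (j, cls j b)"
    by (metis pl_carrierE)
  then show "wk_hom U (pl_meet x y) = wmeet (wk_hom U x) (wk_hom U y)"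
    and "wk_hom U (pl_join x y) = wjoin (wk_hom U x) (wk_hom U y)"
    by (simp_all add: pl_meet_cls pl_join_cls U_simps wmeet_def wjoin_def)
next
  note U_simps = wk_hom_cls[OF U] ultrafilter_inf_iff[OF U] ultrafilter_compl_iff[OF U]
    ultrafilter_top[OF U]
  fix x assume "x \<in> pl_carrier I"
  then obtain i a where "x = (i, cls i a)"
    by (metis pl_carrierE)
  then show "wk_hom U (pl_neg x) = wneg (wk_hom U x)"
    and "wk_hom U (pl_J2 x) = wJ2 (wk_hom U x)"
    by (simp_all add: pl_neg_cls pl_J2_cls U_simps wJ2_def)
next
  show "wk_hom U pl_zero = W0" "wk_hom U pl_one = W1"
    using U by (simp_all add: pl_zero_def pl_one_def wk_hom_cls ultrafilter_top ultrafilter_bot)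
qed

lemma wk_homs_separate:
  assumes "x \<in> pl_carrier I" "y \<in> pl_carrier I"
    and "\<And>U. ultrafilter U \<Longrightarrow> wk_hom U x = wk_hom U y"
  shows "x = y"
proof -
  obtain i a j b where x: "x = (i, cls i a)" and y: "y = (j, cls j b)"
    using assms(1,2) by (metis pl_carrierE)
  have same: "(if i \<in> U then if a \<in> U then W1 else W0 else Wh) =
      (if j \<in> U then if b \<in> U then W1 else W0 else Wh)" if "ultrafilter U" for U
    using assms(3)[OF that] unfolding x y wk_hom_cls[OF that] .
  have "i = j"
  proof (rule ultrafilter_eqI)
    fix U :: "'a set" assume "ultrafilter U"
    from same[OF this] show "i \<in> U \<longleftrightarrow> j \<in> U"
      by (auto split: if_splits)
  qed
  moreover have "inf a i = inf b i"
  proof (rule ultrafilter_eqI)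
    fix U :: "'a set" assume U: "ultrafilter U"
    from same[OF U] show "inf a i \<in> U \<longleftrightarrow> inf b i \<in> U"
      unfolding ultrafilter_inf_iff[OF U] \<open>i = j\<close> by (auto split: if_splits)
  qed
  ultimately show ?thesis
    unfolding x y by (simp add: cls_eq_iff)
qed

lemma bochvar_alg_A_sys_pl_J2:
  assumes "bochvar_system I"
  shows "bochvar_alg (A_sys I pl_J2)"
  unfolding bochvar_alg_def
proof
  show "is_algebra (A_sys I pl_J2)"
    using assms bochvar_system_top[OF assms]
    by (intro is_algebra_A_sys) (auto elim!: pl_carrierE simp: pl_J2_cls)
  have "\<forall>f\<in>wk_hom ` {U. ultrafilter U}. hom_wk (A_sys I pl_J2) f"
    using hom_wk_wk_hom by blast
  moreover have "\<forall>x\<in>carr (A_sys I pl_J2). \<forall>y\<in>carr (A_sys I pl_J2).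
      (\<forall>f\<in>wk_hom ` {U. ultrafilter U}. f x = f y) \<longrightarrow> x = y"
    unfolding A_sys_def balg.simps using wk_homs_separate by blast
  ultimately show "\<exists>F. (\<forall>f\<in>F. hom_wk (A_sys I pl_J2) f) \<and>
      (\<forall>x\<in>carr (A_sys I pl_J2). \<forall>y\<in>carr (A_sys I pl_J2). (\<forall>f\<in>F. f x = f y) \<longrightarrow> x = y)"
    by blast
qed

lemma bochvar_alg_eqI:
  assumes "bochvar_alg A" "a \<in> carr A" "b \<in> carr A" "\<And>f. hom_wk A f \<Longrightarrow> f a = f b"
  shows "a = b"
  using assms unfolding bochvar_alg_def by blast

lemma bochvar_alg_closed:
  assumes "bochvar_alg A" "a \<in> carr A" "b \<in> carr A"
  shows "bmeet A a b \<in> carr A" "bjoin A a b \<in> carr A" "bneg A a \<in> carr A" "bJ2 A a \<in> carr A"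
    "bzero A \<in> carr A" "bone A \<in> carr A"
  using assms unfolding bochvar_alg_def is_algebra_def by blast+

lemma hom_wk_simps:
  assumes "hom_wk A f" "a \<in> carr A" "b \<in> carr A"
  shows "f (bmeet A a b) = wmeet (f a) (f b)" "f (bjoin A a b) = wjoin (f a) (f b)"
    "f (bneg A a) = wneg (f a)" "f (bJ2 A a) = wJ2 (f a)" "f (bzero A) = W0" "f (bone A) = W1"
  using assms unfolding hom_wk_def by blast+

lemma bochvar_alg_J2_excluded_middle:
  assumes A: "bochvar_alg A" and a: "a \<in> carr A"
  shows "bjoin A (bJ2 A a) (bneg A (bJ2 A a)) = bone A"
proof (rule bochvar_alg_eqI[OF A])
  fix f assume "hom_wk A f"
  then show "f (bjoin A (bJ2 A a) (bneg A (bJ2 A a))) = f (bone A)"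
    using A a by (cases "f a") (simp_all add: hom_wk_simps bochvar_alg_closed wjoin_def wJ2_def)
qed (use A a in \<open>simp_all add: bochvar_alg_closed\<close>)

lemma bochvar_alg_meet_J2:
  assumes A: "bochvar_alg A" and a: "a \<in> carr A"
  shows "bmeet A a (bJ2 A a) = a"
proof (rule bochvar_alg_eqI[OF A])
  fix f assume "hom_wk A f"
  then show "f (bmeet A a (bJ2 A a)) = f a"
    using A a by (cases "f a") (simp_all add: hom_wk_simps bochvar_alg_closed wmeet_def wJ2_def)
qed (use A a in \<open>simp_all add: bochvar_alg_closed\<close>)

lemma bochvar_alg_J2_meet_neg:
  assumes A: "bochvar_alg A" and a: "a \<in> carr A" and b: "b \<in> carr A"
  shows "bmeet A (bJ2 A (bmeet A a b)) (bneg A b) = bmeet A b (bzero A)"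
proof (rule bochvar_alg_eqI[OF A])
  fix f assume "hom_wk A f"
  then show "f (bmeet A (bJ2 A (bmeet A a b)) (bneg A b)) = f (bmeet A b (bzero A))"
    using A a b by (cases "f a"; cases "f b")
      (simp_all add: hom_wk_simps bochvar_alg_closed wmeet_def wJ2_def)
qed (use A a b in \<open>simp_all add: bochvar_alg_closed\<close>)

lemma J2_fibre_top:
  assumes I: "bochvar_system I" and A: "bochvar_alg (A_sys I J)" and i: "i \<in> I"
  shows "J (fibre_top i) = (top, cls top i)"
proof -
  have top: "top \<in> I"
    using I by (rule bochvar_system_top)
  let ?x = "fibre_top i" and ?e = "(top, cls top i)"
  have x: "?x \<in> carr (A_sys I J)" and e: "?e \<in> carr (A_sys I J)"
    using i top by (simp_all add: A_sys_def fibre_top_def)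
  then have "J ?x \<in> pl_carrier I"
    using bochvar_alg_closed(4)[OF A] by (simp add: A_sys_def)
  then obtain k a where Jx: "J ?x = (k, cls k a)" by (rule pl_carrierE)
  from bochvar_alg_J2_excluded_middle[OF A x] have "k = top"
    by (simp add: A_sys_def Jx pl_join_cls pl_neg_cls pl_one_def)
  from bochvar_alg_meet_J2[OF A x] have "pl_meet ?x (J ?x) = ?x"
    by (simp add: A_sys_def)
  then have "i \<le> a"
    unfolding Jx \<open>k = top\<close> by (simp add: fibre_top_def pl_meet_cls cls_eq_iff inf.absorb_iff2)
  moreover have "a \<le> i"
  proof -
    have "pl_meet ?x ?e = ?x"
      by (simp add: fibre_top_def pl_meet_cls cls_eq_iff)
    with bochvar_alg_J2_meet_neg[OF A x e] have "inf a (- i) = bot"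
      by (simp add: A_sys_def Jx \<open>k = top\<close> pl_meet_cls pl_neg_cls pl_zero_def cls_eq_iff)
    then show ?thesis
      by (simp add: inf_shunt)
  qed
  ultimately show ?thesis
    using Jx \<open>k = top\<close> by simp
qed

lemma iso_to_BA_A_sys:
  assumes I: "bochvar_system I" and A: "bochvar_alg (A_sys I J)"
  shows "iso_to_BA I (A_sys I J)"
proof -
  have top: "top \<in> I"
    using I by (rule bochvar_system_top)
  let ?g = "\<lambda>x. (top, cls top x)"
  have "inj ?g"
    by (rule injI) (simp add: cls_eq_iff)
  moreover have "range ?g = fibre (A_sys I J) top"
    using top by (auto simp: fibre_def A_sys_def elim!: pl_carrierE)
  ultimately have "bij_betw ?g UNIV (fibre (A_sys I J) top)"
    by (simp add: bij_betw_def)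
  moreover have "?g i \<in> K_set I (A_sys I J)" if "i \<in> I" for i
    using J2_fibre_top[OF I A that] that unfolding K_set_def A_sys_def by force
  ultimately show ?thesis
    unfolding iso_to_BA_def sys_iso_def
    by (intro exI[of _ ?g])
      (simp add: A_sys_def pl_meet_cls pl_join_cls pl_neg_cls pl_zero_def pl_one_def)
qed

theorem theorem3p6:
  fixes I :: "'a::boolean_algebra set"
  assumes "bochvar_system I"
  shows "(\<exists>J. bochvar_alg (A_sys I J)) \<and>
         (\<forall>J. bochvar_alg (A_sys I J) \<longrightarrow> iso_to_BA I (A_sys I J))"
  using bochvar_alg_A_sys_pl_J2[OF assms] iso_to_BA_A_sys[OF assms] by blast

end
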